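(* Let $A_1,A_2,B_1,B_2,C_1\in\mathbb{C}^{r\times r}$ with $C_1+mI$ invertible for all $m\ge0$, $A_iB_1=B_1A_i$ ($i=1,2$) and $C_1B_2=B_2C_1$. Let $n\ge1$ and suppose $A_2+mI$ is invertible for all $m\ge0$. Then $$F_{13}[A_2+nI]=F_{13}+x_2\Big[\sum_{n_1=1}^nF_{13}[A_2+n_1I,B_2+I,C_1+I]\Big]B_2C_1^{-1}+x_3B_1\Big[\sum_{n_1=1}^nF_{13}[A_2+n_1I,B_1+I,C_1+I]\Big]C_1^{-1}.$$ Furthermore, if $A_2-n_1I$ is invertible for $0\le n_1\le n$, then $$F_{13}[A_2-nI]=F_{13}-x_2\Big[\sum_{n_1=0}^{n-1}F_{13}[A_2-n_1I,B_2+I,C_1+I]\Big]B_2C_1^{-1}-x_3B_1\Big[\sum_{n_1=0}^{n-1}F_{13}[A_2-n_1I,B_1+I,C_1+I]\Big]C_1^{-1}.$$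
   Context: For $M\in\mathbb{C}^{r\times r}$: $(M)_0=I$, $(M)_m=M(M+I)\cdots(M+(m-1)I)$, $(M)^{-1}_m=((M)_m)^{-1}$. The three-variable Lauricella matrix function $$F_{13}=F_{13}[A_1,A_2,B_1,B_2;C_1;x_1,x_2,x_3]=\sum_{m_1,m_2,m_3\ge0}(A_1)_{m_1}(A_2)_{m_2+m_3}(B_1)_{m_1+m_3}(B_2)_{m_2}(C_1)^{-1}_{m_1+m_2+m_3}\frac{x_1^{m_1}x_2^{m_2}x_3^{m_3}}{m_1!m_2!m_3!},$$ with scalar variables $x_i$ and matrix products in the written order; identities are of formal power series in the $x_i$. $F_{13}[\dots]$ lists only the shifted parameters, all others unchanged. *)

theory Defs
  imports "HOL-Analysis.Analysis"
begin

text \<open>r x r complex matrices are modelled as complex^'n^'n for a finite index type 'n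
(r = CARD('n)). A formal power series in x1,x2,x3 with matrix coefficients is
modelled by its coefficient function nat => nat => nat => matrix.\<close>

type_synonym 'n cmat = "complex^'n^'n"
type_synonym 'n fps3 = "nat \<Rightarrow> nat \<Rightarrow> nat \<Rightarrow> 'n cmat"

fun mpoch :: "'n::finite cmat \<Rightarrow> nat \<Rightarrow> 'n cmat" where
  "mpoch M 0 = mat 1"
| "mpoch M (Suc m) = mpoch M m ** (M + real m *\<^sub>R mat 1)"

definition F13 :: "'n::finite cmat \<Rightarrow> 'n cmat \<Rightarrow> 'n cmat \<Rightarrow> 'n cmat \<Rightarrow> 'n cmat \<Rightarrow> 'n fps3" where
  "F13 A1 A2 B1 B2 C1 = (\<lambda>m1 m2 m3.
     inverse (fact m1 * fact m2 * fact m3 :: real) *\<^sub>R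
       (mpoch A1 m1 ** mpoch A2 (m2 + m3) ** mpoch B1 (m1 + m3) ** mpoch B2 m2
        ** matrix_inv (mpoch C1 (m1 + m2 + m3))))"

definition mulx2 :: "'n::finite fps3 \<Rightarrow> 'n fps3" where
  "mulx2 S = (\<lambda>m1 m2 m3. if m2 = 0 then 0 else S m1 (m2 - 1) m3)"

definition mulx3 :: "'n::finite fps3 \<Rightarrow> 'n fps3" where
  "mulx3 S = (\<lambda>m1 m2 m3. if m3 = 0 then 0 else S m1 m2 (m3 - 1))"

definition lmul :: "'n::finite cmat \<Rightarrow> 'n fps3 \<Rightarrow> 'n fps3" where
  "lmul M S = (\<lambda>m1 m2 m3. M ** S m1 m2 m3)"

definition rmul :: "'n::finite fps3 \<Rightarrow> 'n cmat \<Rightarrow> 'n fps3" where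
  "rmul S M = (\<lambda>m1 m2 m3. S m1 m2 m3 ** M)"

definition sadd :: "'n::finite fps3 \<Rightarrow> 'n fps3 \<Rightarrow> 'n fps3" where
  "sadd S T = (\<lambda>m1 m2 m3. S m1 m2 m3 + T m1 m2 m3)"

definition ssub :: "'n::finite fps3 \<Rightarrow> 'n fps3 \<Rightarrow> 'n fps3" where
  "ssub S T = (\<lambda>m1 m2 m3. S m1 m2 m3 - T m1 m2 m3)"

end

theory Submission
  imports Defs
begin

text \<open>Since (A+I)_k - (A)_k = k (A+I)_(k-1), the coefficient of x1^m1 x2^m2 x3^m3 in
F13[A2+I] - F13 is m2+m3 times a single matrix term. Splitting one factor off (B2)_m2 and
(C1)_(m1+m2+m3) shows that m2 times this term is the corresponding coefficient of
x2 F13[A2+I,B2+I,C1+I] B2 C1^-1; splitting one factor off (B1)_(m1+m3) instead shows that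
m3 times it is that of x3 B1 F13[A2+I,B1+I,C1+I] C1^-1. The commutation hypotheses move the
split-off factors into place. The resulting contiguous relation for A2 to A2+I telescopes to
both identities, upwards from A2 and downwards from A2-nI.\<close>

lemma matrix_add_rdistrib:
  fixes A :: "'a::semiring_1^'p^'n"
  shows "(B + C) ** A = B ** A + C ** A"
  by (vector matrix_matrix_mult_def sum.distrib[symmetric] field_simps)

lemma matrix_diff_rdistrib:
  fixes A :: "'a::ring_1^'p^'n"
  shows "(B - C) ** A = B ** A - C ** A"
  by (vector matrix_matrix_mult_def sum_subtractf[symmetric] field_simps)

lemma matrix_scaleR_right:
  fixes A :: "'a::real_algebra_1^'n^'m"
  shows "A ** (r *\<^sub>R B) = r *\<^sub>R (A ** B)"
  by (simp add: matrix_scalar_ac scalar_matrix_assoc)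

lemma matrix_sum_rdistrib:
  fixes M :: "'a::semiring_1^'p^'n"
  shows "(\<Sum>i\<in>S. f i) ** M = (\<Sum>i\<in>S. f i ** M)"
  by (induction S rule: infinite_finite_induct) (simp_all add: matrix_add_rdistrib)

lemma matrix_sum_ldistrib:
  fixes M :: "'a::semiring_1^'n^'m"
  shows "M ** (\<Sum>i\<in>S. f i) = (\<Sum>i\<in>S. M ** f i)"
  by (induction S rule: infinite_finite_induct) (simp_all add: matrix_add_ldistrib)

lemma matrix_commute_shift:
  fixes A B :: "'a::real_algebra_1^'n^'n"
  assumes "A ** B = B ** A"
  shows "A ** (B + r *\<^sub>R mat 1) = (B + r *\<^sub>R mat 1) ** A"
  using assms
  by (simp add: matrix_add_ldistrib matrix_add_rdistrib matrix_scaleR_right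
      flip: scalar_matrix_assoc)

lemma matrix_inv_right:
  fixes A :: "'a::semiring_1^'n^'n"
  assumes "invertible A"
  shows "A ** matrix_inv A = mat 1"
  using someI_ex[OF assms[unfolded invertible_def]] by (simp add: matrix_inv_def)

lemma matrix_inv_left:
  fixes A :: "'a::semiring_1^'n^'n"
  assumes "invertible A"
  shows "matrix_inv A ** A = mat 1"
  using someI_ex[OF assms[unfolded invertible_def]] by (simp add: matrix_inv_def)

lemma matrix_inv_commute:
  fixes A X :: "'a::semiring_1^'n^'n"
  assumes "A ** X = X ** A" and "invertible X"
  shows "A ** matrix_inv X = matrix_inv X ** A"
proof -
  have "A ** matrix_inv X = matrix_inv X ** X ** A ** matrix_inv X"
    by (simp add: matrix_inv_left[OF assms(2)])
  also have "\<dots> = matrix_inv X ** (A ** X) ** matrix_inv X"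
    by (simp add: assms(1) matrix_mul_assoc)
  also have "\<dots> = matrix_inv X ** A"
    by (simp add: matrix_inv_right[OF assms(2)] flip: matrix_mul_assoc)
  finally show ?thesis .
qed

lemma matrix_inv_mult:
  fixes X Y :: "'a::semiring_1^'n^'n"
  assumes "invertible X" and "invertible Y"
  shows "matrix_inv (X ** Y) = matrix_inv Y ** matrix_inv X"
proof -
  have "(X ** Y) ** (matrix_inv Y ** matrix_inv X) = X ** (Y ** matrix_inv Y) ** matrix_inv X"
    by (simp only: matrix_mul_assoc)
  then have right_inv: "(X ** Y) ** (matrix_inv Y ** matrix_inv X) = mat 1"
    by (simp add: matrix_inv_right assms)
  have "matrix_inv (X ** Y)
      = matrix_inv (X ** Y) ** ((X ** Y) ** (matrix_inv Y ** matrix_inv X))"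
    by (simp add: right_inv)
  also have "\<dots> = matrix_inv (X ** Y) ** (X ** Y) ** (matrix_inv Y ** matrix_inv X)"
    by (simp only: matrix_mul_assoc)
  also have "\<dots> = matrix_inv Y ** matrix_inv X"
    by (simp add: matrix_inv_left invertible_mult assms)
  finally show ?thesis .
qed

lemma mpoch_commute:
  assumes "A ** B = B ** A"
  shows "A ** mpoch B k = mpoch B k ** A"
proof (induction k)
  case (Suc k)
  have "A ** mpoch B (Suc k) = (A ** mpoch B k) ** (B + real k *\<^sub>R mat 1)"
    by (simp add: matrix_mul_assoc)
  also have "\<dots> = mpoch B k ** (A ** (B + real k *\<^sub>R mat 1))"
    by (simp add: Suc matrix_mul_assoc)
  also have "\<dots> = mpoch B (Suc k) ** A"
    by (simp add: matrix_commute_shift[OF assms] matrix_mul_assoc)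
  finally show ?case .
qed simp

lemma mpoch_Suc_left: "mpoch M (Suc k) = M ** mpoch (M + mat 1) k"
proof (induction k)
  case (Suc k)
  have shift: "M + mat 1 + real k *\<^sub>R mat 1 = M + real (Suc k) *\<^sub>R mat 1"
    by (simp add: algebra_simps)
  show ?case
    by (subst mpoch.simps(2), subst Suc) (simp only: shift matrix_mul_assoc mpoch.simps)
qed simp

lemma mpoch_Suc_right: "mpoch M (Suc k) = mpoch (M + mat 1) k ** M"
  using mpoch_Suc_left[of M k] mpoch_commute[of M "M + mat 1" k]
  by (simp add: matrix_add_ldistrib matrix_add_rdistrib)

lemma mpoch_shift_diff:
  "mpoch (M + mat 1) (Suc k) - mpoch M (Suc k) = real (Suc k) *\<^sub>R mpoch (M + mat 1) k"
proof (induction k)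
  case (Suc k)
  have shifts: "M + real (Suc k) *\<^sub>R mat 1 = (M + real k *\<^sub>R mat 1) + mat 1"
     "M + mat 1 + real (Suc k) *\<^sub>R mat 1 = (M + mat 1 + real k *\<^sub>R mat 1) + mat 1"
    by (simp_all add: algebra_simps)
  have "mpoch (M + mat 1) (Suc (Suc k)) - mpoch M (Suc (Suc k))
     = (mpoch (M + mat 1) (Suc k) - mpoch M (Suc k)) ** (M + real (Suc k) *\<^sub>R mat 1)
       + mpoch (M + mat 1) (Suc k)"
    by (simp only: mpoch.simps(2) shifts matrix_diff_rdistrib matrix_add_ldistrib)
      (simp add: algebra_simps)
  also have "\<dots> = real (Suc k) *\<^sub>R mpoch (M + mat 1) (Suc k) + mpoch (M + mat 1) (Suc k)"
    unfolding Suc by (simp add: matrix_add_rdistrib algebra_simps flip: scalar_matrix_assoc)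
  also have "\<dots> = real (Suc (Suc k)) *\<^sub>R mpoch (M + mat 1) (Suc k)"
    by (simp only: of_nat_Suc[of "Suc k"] scaleR_add_left scaleR_one add.commute)
  finally show ?case .
qed simp

lemma invertible_mpoch:
  assumes "\<And>m::nat. invertible (C + real m *\<^sub>R mat 1)"
  shows "invertible (mpoch C k)"
proof (induction k)
  case 0
  show ?case by (auto simp: invertible_def)
qed (simp add: invertible_mult assms)

lemma matrix_inv_mpoch_Suc:
  assumes "\<And>m::nat. invertible (C + real m *\<^sub>R mat 1)"
  shows "matrix_inv (mpoch C (Suc k)) = matrix_inv (mpoch (C + mat 1) k) ** matrix_inv C"
proof -
  have "invertible (C + mat 1 + real m *\<^sub>R mat 1)" for m
    using assms[of "Suc m"] by (simp add: algebra_simps)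
  then have "invertible (mpoch (C + mat 1) k)"
    by (rule invertible_mpoch)
  moreover have "invertible C"
    using assms[of 0] by simp
  ultimately show ?thesis
    by (simp only: mpoch_Suc_left matrix_inv_mult)
qed

lemma F13_A2_shift_coeff:
  assumes "m2 + m3 = Suc j"
  shows "F13 A1 (A2 + mat 1) B1 B2 C1 m1 m2 m3 = F13 A1 A2 B1 B2 C1 m1 m2 m3
    + (real (m2 + m3) / (fact m1 * fact m2 * fact m3)) *\<^sub>R
        (mpoch A1 m1 ** mpoch (A2 + mat 1) j ** mpoch B1 (m1 + m3) ** mpoch B2 m2
         ** matrix_inv (mpoch C1 (m1 + m2 + m3)))"
proof -
  have "mpoch (A2 + mat 1) (m2 + m3)
      = mpoch A2 (m2 + m3) + real (m2 + m3) *\<^sub>R mpoch (A2 + mat 1) j"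
    using mpoch_shift_diff[of A2 j] assms by (simp add: algebra_simps)
  then show ?thesis
    by (simp add: F13_def matrix_add_ldistrib matrix_add_rdistrib matrix_scaleR_right
        scaleR_add_right divide_inverse_commute flip: scalar_matrix_assoc)
qed

lemma mulx2_F13_shift_coeff:
  assumes hC: "\<And>m::nat. invertible (C1 + real m *\<^sub>R mat 1)"
    and hC1B2: "C1 ** B2 = B2 ** C1"
    and "m2 + m3 = Suc j"
  shows "mulx2 (rmul (F13 A1 A2 B1 (B2 + mat 1) (C1 + mat 1)) (B2 ** matrix_inv C1)) m1 m2 m3
    = (real m2 / (fact m1 * fact m2 * fact m3)) *\<^sub>R
        (mpoch A1 m1 ** mpoch A2 j ** mpoch B1 (m1 + m3) ** mpoch B2 m2
         ** matrix_inv (mpoch C1 (m1 + m2 + m3)))"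
proof (cases m2)
  case 0
  then show ?thesis by (simp add: mulx2_def)
next
  case (Suc a)
  define T where "T = matrix_inv (mpoch (C1 + mat 1) (m1 + a + m3))"
  have "invertible (C1 + mat 1 + real m *\<^sub>R mat 1)" for m
    using hC[of "Suc m"] by (simp add: algebra_simps)
  moreover have "B2 ** (C1 + mat 1) = (C1 + mat 1) ** B2"
    using matrix_commute_shift[of B2 C1 1] hC1B2 by simp
  ultimately have "B2 ** T = T ** B2"
    unfolding T_def by (intro matrix_inv_commute mpoch_commute invertible_mpoch)
  then have B2_T: "B2 ** (T ** Z) = T ** (B2 ** Z)" for Z
    by (simp add: matrix_mul_assoc)
  have j: "j = a + m3"
    using Suc assms(3) by simp
  have "mulx2 (rmul (F13 A1 A2 B1 (B2 + mat 1) (C1 + mat 1)) (B2 ** matrix_inv C1)) m1 m2 m3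
    = inverse (fact m1 * fact a * fact m3 :: real) *\<^sub>R
        (mpoch A1 m1 ** mpoch A2 j ** mpoch B1 (m1 + m3)
         ** (mpoch (B2 + mat 1) a ** B2) ** (T ** matrix_inv C1))"
    by (simp add: mulx2_def rmul_def F13_def Suc j B2_T T_def[symmetric]
        flip: scalar_matrix_assoc matrix_mul_assoc del: mpoch.simps)
  also have "\<dots> = (real m2 / (fact m1 * fact m2 * fact m3)) *\<^sub>R
        (mpoch A1 m1 ** mpoch A2 j ** mpoch B1 (m1 + m3) ** mpoch B2 m2
         ** matrix_inv (mpoch C1 (m1 + m2 + m3)))"
  proof -
    have "inverse (fact m1 * fact a * fact m3 :: real) = real m2 / (fact m1 * fact m2 * fact m3)"
      using Suc by (simp add: field_simps del: of_nat_Suc)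
    moreover have "mpoch (B2 + mat 1) a ** B2 = mpoch B2 m2"
      using Suc by (simp only: mpoch_Suc_right)
    moreover have "T ** matrix_inv C1 = matrix_inv (mpoch C1 (m1 + m2 + m3))"
      using Suc matrix_inv_mpoch_Suc[OF hC, of "m1 + a + m3"] by (simp add: T_def)
    ultimately show ?thesis by (simp only:)
  qed
  finally show ?thesis .
qed

lemma mulx3_F13_shift_coeff:
  assumes hC: "\<And>m::nat. invertible (C1 + real m *\<^sub>R mat 1)"
    and hA1B1: "A1 ** B1 = B1 ** A1"
    and hA2B1: "A2 ** B1 = B1 ** A2"
    and "m2 + m3 = Suc j"
  shows "mulx3 (lmul B1 (rmul (F13 A1 A2 (B1 + mat 1) B2 (C1 + mat 1)) (matrix_inv C1))) m1 m2 m3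
    = (real m3 / (fact m1 * fact m2 * fact m3)) *\<^sub>R
        (mpoch A1 m1 ** mpoch A2 j ** mpoch B1 (m1 + m3) ** mpoch B2 m2
         ** matrix_inv (mpoch C1 (m1 + m2 + m3)))"
proof (cases m3)
  case 0
  then show ?thesis by (simp add: mulx3_def)
next
  case (Suc b)
  have B1_A: "B1 ** (mpoch A1 m1 ** Z) = mpoch A1 m1 ** (B1 ** Z)"
    "B1 ** (mpoch A2 j ** Z) = mpoch A2 j ** (B1 ** Z)" for Z
    using mpoch_commute[of B1 A1 m1] mpoch_commute[of B1 A2 j] hA1B1 hA2B1
    by (simp_all add: matrix_mul_assoc)
  have j: "j = m2 + b"
    using Suc assms(4) by simp
  have "mulx3 (lmul B1 (rmul (F13 A1 A2 (B1 + mat 1) B2 (C1 + mat 1)) (matrix_inv C1))) m1 m2 m3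
    = inverse (fact m1 * fact m2 * fact b :: real) *\<^sub>R
        (mpoch A1 m1 ** mpoch A2 j ** (B1 ** mpoch (B1 + mat 1) (m1 + b)) ** mpoch B2 m2
         ** (matrix_inv (mpoch (C1 + mat 1) (m1 + m2 + b)) ** matrix_inv C1))"
    by (simp add: mulx3_def lmul_def rmul_def F13_def Suc j[symmetric] B1_A matrix_scaleR_right add.assoc
        flip: scalar_matrix_assoc matrix_mul_assoc del: mpoch.simps)
  also have "\<dots> = (real m3 / (fact m1 * fact m2 * fact m3)) *\<^sub>R
        (mpoch A1 m1 ** mpoch A2 j ** mpoch B1 (m1 + m3) ** mpoch B2 m2
         ** matrix_inv (mpoch C1 (m1 + m2 + m3)))"
  proof -
    have "inverse (fact m1 * fact m2 * fact b :: real) = real m3 / (fact m1 * fact m2 * fact m3)"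
      using Suc by (simp add: field_simps del: of_nat_Suc)
    moreover have "B1 ** mpoch (B1 + mat 1) (m1 + b) = mpoch B1 (m1 + m3)"
      using Suc by (simp only: mpoch_Suc_left add_Suc_right)
    moreover have "matrix_inv (mpoch (C1 + mat 1) (m1 + m2 + b)) ** matrix_inv C1
        = matrix_inv (mpoch C1 (m1 + m2 + m3))"
      using Suc matrix_inv_mpoch_Suc[OF hC, of "m1 + m2 + b"] by simp
    ultimately show ?thesis by (simp only:)
  qed
  finally show ?thesis .
qed

lemma F13_A2_succ:
  assumes hC: "\<And>m::nat. invertible (C1 + real m *\<^sub>R mat 1)"
    and hA1B1: "A1 ** B1 = B1 ** A1"
    and hA2B1: "A2 ** B1 = B1 ** A2"
    and hC1B2: "C1 ** B2 = B2 ** C1"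
  shows "F13 A1 (A2 + mat 1) B1 B2 C1 m1 m2 m3 = F13 A1 A2 B1 B2 C1 m1 m2 m3
    + mulx2 (rmul (F13 A1 (A2 + mat 1) B1 (B2 + mat 1) (C1 + mat 1)) (B2 ** matrix_inv C1)) m1 m2 m3
    + mulx3 (lmul B1 (rmul (F13 A1 (A2 + mat 1) (B1 + mat 1) B2 (C1 + mat 1)) (matrix_inv C1))) m1 m2 m3"
proof (cases "m2 + m3")
  case 0
  then show ?thesis by (simp add: F13_def mulx2_def mulx3_def)
next
  case (Suc j)
  have "(A2 + mat 1) ** B1 = B1 ** (A2 + mat 1)"
    using matrix_commute_shift[of B1 A2 1] hA2B1 by simp
  then show ?thesis
    using F13_A2_shift_coeff[OF Suc] mulx2_F13_shift_coeff[OF hC hC1B2 Suc]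
      mulx3_F13_shift_coeff[OF hC hA1B1 _ Suc]
    by (simp add: add_divide_distrib scaleR_add_left add.assoc)
qed

lemma F13_A2_plus_nat:
  assumes hC: "\<And>m::nat. invertible (C1 + real m *\<^sub>R mat 1)"
    and hA1B1: "A1 ** B1 = B1 ** A1"
    and hA2B1: "A2 ** B1 = B1 ** A2"
    and hC1B2: "C1 ** B2 = B2 ** C1"
  shows "F13 A1 (A2 + real n *\<^sub>R mat 1) B1 B2 C1 m1 m2 m3 = F13 A1 A2 B1 B2 C1 m1 m2 m3
    + (\<Sum>n1 = 1..n.
        mulx2 (rmul (F13 A1 (A2 + real n1 *\<^sub>R mat 1) B1 (B2 + mat 1) (C1 + mat 1))
          (B2 ** matrix_inv C1)) m1 m2 m3
      + mulx3 (lmul B1 (rmul (F13 A1 (A2 + real n1 *\<^sub>R mat 1) (B1 + mat 1) B2 (C1 + mat 1))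
          (matrix_inv C1))) m1 m2 m3)"
proof (induction n)
  case (Suc n)
  have "A2 + real n *\<^sub>R mat 1 + mat 1 = A2 + real (Suc n) *\<^sub>R mat 1"
    by (simp add: algebra_simps)
  moreover note F13_A2_succ[OF hC hA1B1 _ hC1B2, of "A2 + real n *\<^sub>R mat 1" m1 m2 m3]
  ultimately show ?case
    using Suc matrix_commute_shift[of B1 A2 "real n"] hA2B1 by (simp add: algebra_simps)
qed simp

lemma F13_A2_minus_nat:
  assumes hC: "\<And>m::nat. invertible (C1 + real m *\<^sub>R mat 1)"
    and hA1B1: "A1 ** B1 = B1 ** A1"
    and hA2B1: "A2 ** B1 = B1 ** A2"
    and hC1B2: "C1 ** B2 = B2 ** C1"
  shows "F13 A1 (A2 - real n *\<^sub>R mat 1) B1 B2 C1 m1 m2 m3 = F13 A1 A2 B1 B2 C1 m1 m2 m3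
    - (\<Sum>n1<n.
        mulx2 (rmul (F13 A1 (A2 - real n1 *\<^sub>R mat 1) B1 (B2 + mat 1) (C1 + mat 1))
          (B2 ** matrix_inv C1)) m1 m2 m3
      + mulx3 (lmul B1 (rmul (F13 A1 (A2 - real n1 *\<^sub>R mat 1) (B1 + mat 1) B2 (C1 + mat 1))
          (matrix_inv C1))) m1 m2 m3)"
proof (induction n)
  case (Suc n)
  have "A2 - real (Suc n) *\<^sub>R mat 1 + mat 1 = A2 - real n *\<^sub>R mat 1"
    by (simp add: algebra_simps)
  moreover note F13_A2_succ[OF hC hA1B1 _ hC1B2, of "A2 - real (Suc n) *\<^sub>R mat 1" m1 m2 m3]
  ultimately show ?case
    using Suc matrix_commute_shift[of B1 A2 "- real (Suc n)"] hA2B1 by (simp add: algebra_simps)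
qed simp

lemma mulx2_rmul_sum:
  "mulx2 (rmul (\<lambda>m1 m2 m3. \<Sum>i\<in>I. f i m1 m2 m3) M) m1 m2 m3
    = (\<Sum>i\<in>I. mulx2 (rmul (f i) M) m1 m2 m3)"
  by (simp add: mulx2_def rmul_def matrix_sum_rdistrib)

lemma mulx3_lmul_rmul_sum:
  "mulx3 (lmul B (rmul (\<lambda>m1 m2 m3. \<Sum>i\<in>I. f i m1 m2 m3) M)) m1 m2 m3
    = (\<Sum>i\<in>I. mulx3 (lmul B (rmul (f i) M)) m1 m2 m3)"
  by (simp add: mulx3_def lmul_def rmul_def matrix_sum_rdistrib matrix_sum_ldistrib)

theorem mainTheorem18:
  fixes A1 A2 B1 B2 C1 :: "'n::finite cmat" and n :: nat
  assumes hC: "\<And>m::nat. invertible (C1 + real m *\<^sub>R mat 1)"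
    and hA1B1: "A1 ** B1 = B1 ** A1"
    and hA2B1: "A2 ** B1 = B1 ** A2"
    and hC1B2: "C1 ** B2 = B2 ** C1"
    and hn: "n \<ge> 1"
    and hA2: "\<And>m::nat. invertible (A2 + real m *\<^sub>R mat 1)"
  shows
   "F13 A1 (A2 + real n *\<^sub>R mat 1) B1 B2 C1 =
      sadd (sadd (F13 A1 A2 B1 B2 C1)
      (mulx2 (rmul (\<lambda>m1 m2 m3. \<Sum>n1 = 1..n.
            F13 A1 (A2 + real n1 *\<^sub>R mat 1) B1 (B2 + mat 1) (C1 + mat 1) m1 m2 m3)
          (B2 ** matrix_inv C1))))
      (mulx3 (lmul B1 (rmul (\<lambda>m1 m2 m3. \<Sum>n1 = 1..n.
            F13 A1 (A2 + real n1 *\<^sub>R mat 1) (B1 + mat 1) B2 (C1 + mat 1) m1 m2 m3)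
          (matrix_inv C1))))
   \<and>
   ((\<forall>n1\<le>n. invertible (A2 - real n1 *\<^sub>R mat 1)) \<longrightarrow>
    F13 A1 (A2 - real n *\<^sub>R mat 1) B1 B2 C1 =
      ssub (ssub (F13 A1 A2 B1 B2 C1)
      (mulx2 (rmul (\<lambda>m1 m2 m3. \<Sum>n1 = 0..n - 1.
            F13 A1 (A2 - real n1 *\<^sub>R mat 1) B1 (B2 + mat 1) (C1 + mat 1) m1 m2 m3)
          (B2 ** matrix_inv C1))))
      (mulx3 (lmul B1 (rmul (\<lambda>m1 m2 m3. \<Sum>n1 = 0..n - 1.
            F13 A1 (A2 - real n1 *\<^sub>R mat 1) (B1 + mat 1) B2 (C1 + mat 1) m1 m2 m3)
          (matrix_inv C1)))))"
proof -
  have "{0..n - 1} = {..<n}"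
    using hn by auto
  then show ?thesis
    unfolding sadd_def ssub_def fun_eq_iff
    by (simp only: mulx2_rmul_sum mulx3_lmul_rmul_sum sum.distrib add.assoc diff_diff_eq
        F13_A2_plus_nat[OF hC hA1B1 hA2B1 hC1B2] F13_A2_minus_nat[OF hC hA1B1 hA2B1 hC1B2]
        simp_thms)
qed

end
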